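(* Let $I\times J$ be a dyadic square and let $\Phi(x_1,\ldots,x_m,y_1,\ldots,y_n)$ be a bounded measurable function. For a dyadic square $I'\times J'$ put $\mathcal{B}_{I'\times J'}:=\big[\Phi(x_1,\ldots,x_m,y_1,\ldots,y_n)\big]_{x_1,\ldots,x_m\in I',\,y_1,\ldots,y_n\in J'}$. Then $$\Box\mathcal{B}_{I\times J}=\sum_{\substack{S\subseteq\{1,\ldots,m\},\ T\subseteq\{1,\ldots,n\}\\ |S|,|T|\ \text{even},\ (S,T)\neq(\emptyset,\emptyset)}}\Big[\big\langle\Phi(x_1,\ldots,x_m,y_1,\ldots,y_n)\big\rangle_{x_i\in I\ (i\in S),\ y_j\in J\ (j\in T)}\Big]_{x_i\in I\ (i\notin S),\ y_j\in J\ (j\notin T)} .$$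
   Context: For a dyadic interval $I$ with left half $I_l$ and right half $I_r$ and an integrable $f$, write $[f(x)]_{x\in I}:=\frac{1}{|I|}\int_I f(x)\,dx$ and $\langle f(x)\rangle_{x\in I}:=\frac{1}{|I|}\big(\int_{I_l}f(x)\,dx-\int_{I_r}f(x)\,dx\big)$. Brackets with several subscripted variables denote the corresponding iterated averages in each variable (the order is irrelevant). For a quantity $\mathcal{B}$ defined for every dyadic square, its first order difference is $\Box\mathcal{B}_{I\times J}:=\frac14\big(\mathcal{B}_{I_l\times J_l}+\mathcal{B}_{I_l\times J_r}+\mathcal{B}_{I_r\times J_l}+\mathcal{B}_{I_r\times J_r}\big)-\mathcal{B}_{I\times J}$. *)

theory Defs
  imports "HOL-Analysis.Analysis"
begin

definition dint :: "int \<Rightarrow> int \<Rightarrow> real set" where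
  "dint j k = {real_of_int k / 2 powi j ..< (real_of_int k + 1) / 2 powi j}"

definition dleft :: "int \<Rightarrow> int \<Rightarrow> real set" where
  "dleft j k = dint (j + 1) (2 * k)"

definition dright :: "int \<Rightarrow> int \<Rightarrow> real set" where
  "dright j k = dint (j + 1) (2 * k + 1)"

definition avg1 :: "real set \<Rightarrow> real measure" where
  "avg1 A = uniform_measure lborel A"

text \<open>Haar weight of dint j k: 1 on left half, -1 on right half.
  The Haar bracket of one variable is the average of f times this weight:
  (1/|I|)(int_{I_l} f - int_{I_r} f).\<close>
definition haarw :: "int \<Rightarrow> int \<Rightarrow> real \<Rightarrow> real" where
  "haarw j k t = indicator (dleft j k) t - indicator (dright j k) t"

text \<open>Iterated average [Phi]_{x_1..x_m in A, y_1..y_n in B} (coordinates 0..m-1, 0..n-1).\<close>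
definition Bavg :: "nat \<Rightarrow> nat \<Rightarrow> ((nat \<Rightarrow> real) \<Rightarrow> (nat \<Rightarrow> real) \<Rightarrow> real)
      \<Rightarrow> real set \<Rightarrow> real set \<Rightarrow> real" where
  "Bavg m n \<Phi> A B =
     (\<integral>x. (\<integral>y. \<Phi> x y \<partial>(PiM {..<n} (\<lambda>_. avg1 B))) \<partial>(PiM {..<m} (\<lambda>_. avg1 A)))"

definition mixed :: "nat \<Rightarrow> nat \<Rightarrow> ((nat \<Rightarrow> real) \<Rightarrow> (nat \<Rightarrow> real) \<Rightarrow> real)
      \<Rightarrow> int \<Rightarrow> int \<Rightarrow> int \<Rightarrow> nat set \<Rightarrow> nat set \<Rightarrow> real" where
  "mixed m n \<Phi> j k1 k2 S T =
     (\<integral>x. (\<integral>y. \<Phi> x y * (\<Prod>i\<in>S. haarw j k1 (x i)) * (\<Prod>l\<in>T. haarw j k2 (y l))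
        \<partial>(PiM {..<n} (\<lambda>_. avg1 (dint j k2)))) \<partial>(PiM {..<m} (\<lambda>_. avg1 (dint j k1))))"

definition box :: "(real set \<Rightarrow> real set \<Rightarrow> real) \<Rightarrow> int \<Rightarrow> int \<Rightarrow> int \<Rightarrow> real" where
  "box \<B> j k1 k2 =
     (\<B> (dleft j k1) (dleft j k2) + \<B> (dleft j k1) (dright j k2)
      + \<B> (dright j k1) (dleft j k2) + \<B> (dright j k1) (dright j k2)) / 4
     - \<B> (dint j k1) (dint j k2)"

end

theory Submission
  imports Defs "HOL-Probability.Probability"
begin

text \<open>
  The normalised Lebesgue measure on a half of a dyadic interval I is the normalised measure
  on I with density 1 + a h_I, where h_I is the Haar function of I and a = 1 (left half) or
  a = -1 (right half). So the average of \<Phi> over a half square is the average over I \<times> J of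
  \<Phi> times the products of the factors 1 + a h_I(x_i) and 1 + b h_J(y_l), and expanding these
  products gives a sum over (S, T) of a^|S| b^|T| times a mixed bracket. Summing over the four
  sign pairs (a, b) kills every term with |S| or |T| odd, and the term S = T = {} is the
  average over I \<times> J itself, which the first order difference subtracts.
\<close>

lemma uniform_measure_subset:
  assumes "B \<subseteq> A" "A \<in> sets M" "B \<in> sets M"
    and A: "emeasure M A = ennreal a" and B: "emeasure M B = ennreal b" and "0 < b"
  shows "uniform_measure M B = density (uniform_measure M A) (\<lambda>x. ennreal (a / b * indicator B x))"
proof -
  have "ennreal b \<le> ennreal a"
    using emeasure_mono[OF assms(1,2)] A B by simp
  then have "0 < a" using \<open>0 < b\<close> by (simp add: ennreal_le_iff2)
  have "density (density M (\<lambda>x. indicator A x / emeasure M A)) (\<lambda>x. ennreal (a / b * indicator B x))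
      = density M (\<lambda>x. indicator A x / emeasure M A * ennreal (a / b * indicator B x))"
    using assms by (intro density_density_eq) auto
  also have "\<dots> = density M (\<lambda>x. indicator B x / emeasure M B)"
  proof (rule density_cong)
    show "AE x in M. indicator A x / emeasure M A * ennreal (a / b * indicator B x)
        = indicator B x / emeasure M B"
      using \<open>0 < a\<close> \<open>0 < b\<close> \<open>B \<subseteq> A\<close>
      by (intro AE_I2)
         (auto simp: A B indicator_def divide_ennreal[of 1, simplified] ennreal_mult''[symmetric])
  qed (use assms in auto)
  finally show ?thesis
    unfolding uniform_measure_def by simp
qed

lemma PiM_density:
  assumes I: "finite I" and M: "sigma_finite_measure M" and g[measurable]: "g \<in> borel_measurable M"
    and D: "sigma_finite_measure (density M g)"
  shows "PiM I (\<lambda>_. density M g) = density (PiM I (\<lambda>_. M)) (\<lambda>x. \<Prod>i\<in>I. g (x i))"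
proof -
  interpret D: product_sigma_finite "\<lambda>_. density M g" using D by (simp add: product_sigma_finite_def)
  interpret MM: product_sigma_finite "\<lambda>_. M" using M by (simp add: product_sigma_finite_def)
  have "density (PiM I (\<lambda>_. M)) (\<lambda>x. \<Prod>i\<in>I. g (x i)) = PiM I (\<lambda>_. density M g)"
  proof (rule D.PiM_eqI[OF I])
    show "sets (density (PiM I (\<lambda>_. M)) (\<lambda>x. \<Prod>i\<in>I. g (x i))) = sets (PiM I (\<lambda>_. density M g))"
      by (auto intro!: sets_PiM_cong)
  next
    fix A assume "\<And>i. i \<in> I \<Longrightarrow> A i \<in> sets (density M g)"
    then have A[measurable]: "\<And>i. i \<in> I \<Longrightarrow> A i \<in> sets M" by simp
    have "Pi\<^sub>E I A \<in> sets (PiM I (\<lambda>_. M))" using A by (auto intro!: sets_PiM_I_finite I)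
    then have "emeasure (density (PiM I (\<lambda>_. M)) (\<lambda>x. \<Prod>i\<in>I. g (x i))) (Pi\<^sub>E I A)
       = (\<integral>\<^sup>+ x. (\<Prod>i\<in>I. g (x i)) * indicator (Pi\<^sub>E I A) x \<partial>PiM I (\<lambda>_. M))"
      by (subst emeasure_density) auto
    also have "\<dots> = (\<integral>\<^sup>+ x. (\<Prod>i\<in>I. g (x i) * indicator (A i) (x i)) \<partial>PiM I (\<lambda>_. M))"
    proof (rule nn_integral_cong)
      fix x assume "x \<in> space (PiM I (\<lambda>_. M))"
      then have "indicator (Pi\<^sub>E I A) x = (\<Prod>i\<in>I. indicator (A i) (x i) :: ennreal)"
        by (auto simp: space_PiM indicator_def PiE_def Pi_def I extensional_def)
      then show "(\<Prod>i\<in>I. g (x i)) * indicator (Pi\<^sub>E I A) x = (\<Prod>i\<in>I. g (x i) * indicator (A i) (x i))"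
        by (simp add: prod.distrib)
    qed
    also have "\<dots> = (\<Prod>i\<in>I. \<integral>\<^sup>+ t. g t * indicator (A i) t \<partial>M)"
      by (rule MM.product_nn_integral_prod[OF I]) auto
    also have "\<dots> = (\<Prod>i\<in>I. emeasure (density M g) (A i))"
      by (intro prod.cong refl, subst emeasure_density) auto
    finally show "emeasure (density (PiM I (\<lambda>_. M)) (\<lambda>x. \<Prod>i\<in>I. g (x i))) (Pi\<^sub>E I A)
       = (\<Prod>i\<in>I. emeasure (density M g) (A i))" .
  qed
  then show ?thesis by simp
qed

lemma iterated_integral_density:
  fixes F :: "'a \<Rightarrow> 'b \<Rightarrow> real"
  assumes "sigma_finite_measure N"
    and [measurable]: "g \<in> borel_measurable M" "h \<in> borel_measurable N"
    and "\<And>x. 0 \<le> g x" "\<And>y. 0 \<le> h y"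
    and F[measurable]: "(\<lambda>(x, y). F x y) \<in> borel_measurable (M \<Otimes>\<^sub>M N)"
  shows "(\<integral>x. (\<integral>y. F x y \<partial>density N h) \<partial>density M g) = (\<integral>x. (\<integral>y. g x * h y * F x y \<partial>N) \<partial>M)"
proof -
  interpret N: sigma_finite_measure N by fact
  have inner: "(\<integral>y. F x y \<partial>density N h) = (\<integral>y. h y * F x y \<partial>N)" if "x \<in> space M" for x
  proof -
    have "F x \<in> borel_measurable N" using measurable_Pair2[OF F that] by simp
    then show ?thesis using integral_density[of "F x" N h] assms by simp
  qed
  have "(\<lambda>(x, y). h y * F x y) \<in> borel_measurable (M \<Otimes>\<^sub>M N)" by measurable
  then have "(\<lambda>x. \<integral>y. h y * F x y \<partial>N) \<in> borel_measurable M"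
    using N.borel_measurable_lebesgue_integral by simp
  have "(\<integral>x. (\<integral>y. F x y \<partial>density N h) \<partial>density M g) = (\<integral>x. (\<integral>y. h y * F x y \<partial>N) \<partial>density M g)"
    by (rule Bochner_Integration.integral_cong[OF refl]) (simp add: inner)
  also have "\<dots> = (\<integral>x. g x * (\<integral>y. h y * F x y \<partial>N) \<partial>M)"
    using integral_density[OF \<open>(\<lambda>x. \<integral>y. h y * F x y \<partial>N) \<in> borel_measurable M\<close>, of g] assms
    by simp
  also have "\<dots> = (\<integral>x. (\<integral>y. g x * h y * F x y \<partial>N) \<partial>M)"
    by (simp add: mult.assoc)
  finally show ?thesis .
qed

lemma iterated_integral_sum:
  fixes F :: "'c \<Rightarrow> 'a \<Rightarrow> 'b \<Rightarrow> real"
  assumes "prob_space M" "prob_space N" "finite A"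
    and F: "\<And>a. a \<in> A \<Longrightarrow> (\<lambda>(x, y). F a x y) \<in> borel_measurable (M \<Otimes>\<^sub>M N)"
    and bounded: "\<And>a. a \<in> A \<Longrightarrow> \<exists>C. \<forall>x y. \<bar>F a x y\<bar> \<le> C"
  shows "(\<integral>x. (\<integral>y. (\<Sum>a\<in>A. F a x y) \<partial>N) \<partial>M) = (\<Sum>a\<in>A. \<integral>x. (\<integral>y. F a x y \<partial>N) \<partial>M)"
proof -
  interpret pair_prob_space M N
    using assms by (simp add: pair_prob_space_def pair_sigma_finite_def prob_space_imp_sigma_finite)
  have integrable_pair: "integrable (M \<Otimes>\<^sub>M N) (\<lambda>(x, y). F a x y)" if a: "a \<in> A" for a
  proof -
    obtain C where "\<forall>x y. \<bar>F a x y\<bar> \<le> C" using bounded[OF a] by blast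
    then show ?thesis
      by (intro P.integrable_const_bound[where B=C]) (use F[OF a] in auto)
  qed
  have "integrable N (F a x)" if a: "a \<in> A" and x: "x \<in> space M" for a x
  proof -
    obtain C where "\<forall>x y. \<bar>F a x y\<bar> \<le> C" using bounded[OF a] by blast
    then show ?thesis
      using measurable_Pair2[OF F[OF a] x] by (intro M2.integrable_const_bound[where B=C]) auto
  qed
  then have "(\<integral>x. (\<integral>y. (\<Sum>a\<in>A. F a x y) \<partial>N) \<partial>M) = (\<integral>x. (\<Sum>a\<in>A. \<integral>y. F a x y \<partial>N) \<partial>M)"
    by (intro Bochner_Integration.integral_cong refl Bochner_Integration.integral_sum) auto
  also have "\<dots> = (\<Sum>a\<in>A. \<integral>x. (\<integral>y. F a x y \<partial>N) \<partial>M)"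
    using integrable_fst'[OF integrable_pair] by (intro Bochner_Integration.integral_sum) auto
  finally show ?thesis .
qed

lemma prod_1_plus_mult_eq_sum_Pow:
  fixes f :: "'a \<Rightarrow> 'b::comm_semiring_1"
  assumes "finite I"
  shows "(\<Prod>i\<in>I. 1 + s * f i) = (\<Sum>S\<in>Pow I. s ^ card S * (\<Prod>i\<in>S. f i))"
  using prod_add[OF assms, of "\<lambda>i. s * f i" "\<lambda>_. 1"]
  by (simp add: add.commute prod.distrib)

lemma power_int_2_succ: "(2::real) powi (j + 1) = 2 * 2 powi j"
  by (simp add: power_int_add)

lemma dleft_eq: "dleft j k = {real_of_int k / 2 powi j ..< (real_of_int k + 1/2) / 2 powi j}"
  unfolding dleft_def dint_def power_int_2_succ by (auto simp: field_simps)

lemma dright_eq: "dright j k = {(real_of_int k + 1/2) / 2 powi j ..< (real_of_int k + 1) / 2 powi j}"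
  unfolding dright_def dint_def power_int_2_succ by (auto simp: field_simps)

lemma dint_eq_dleft_Un_dright: "dint j k = dleft j k \<union> dright j k"
proof -
  have "real_of_int k / 2 powi j \<le> (real_of_int k + 1/2) / 2 powi j"
       "(real_of_int k + 1/2) / 2 powi j \<le> (real_of_int k + 1) / 2 powi j"
    by (simp_all add: divide_right_mono)
  then show ?thesis unfolding dint_def dleft_eq dright_eq by auto
qed

lemma emeasure_dint: "emeasure lborel (dint j k) = ennreal (1 / 2 powi j)"
  unfolding dint_def by (subst emeasure_lborel_Ico) (auto simp: field_simps)

lemma emeasure_dleft: "emeasure lborel (dleft j k) = ennreal (1 / (2 * 2 powi j))"
  unfolding dleft_eq by (subst emeasure_lborel_Ico) (auto simp: field_simps)

lemma emeasure_dright: "emeasure lborel (dright j k) = ennreal (1 / (2 * 2 powi j))"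
  unfolding dright_eq by (subst emeasure_lborel_Ico) (auto simp: field_simps)

lemma sets_dint [measurable]: "dint j k \<in> sets borel"
  and sets_dleft [measurable]: "dleft j k \<in> sets borel"
  and sets_dright [measurable]: "dright j k \<in> sets borel"
  by (simp_all add: dint_def dleft_eq dright_eq)

lemma haarw_eq: "haarw j k t = (if t \<in> dleft j k then 1 else if t \<in> dright j k then -1 else 0)"
  unfolding haarw_def dleft_eq dright_eq by (auto simp: indicator_def)

lemma abs_haarw_le_1: "\<bar>haarw j k t\<bar> \<le> 1"
  by (simp add: haarw_eq)

lemma borel_measurable_haarw [measurable]: "haarw j k \<in> borel_measurable borel"
  unfolding haarw_def by measurable

lemma prob_space_avg1_dint: "prob_space (avg1 (dint j k))"
  unfolding avg1_def by (rule prob_space_uniform_measure) (simp_all add: emeasure_dint)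

definition dhalf :: "int \<Rightarrow> int \<Rightarrow> bool \<Rightarrow> real set" where
  "dhalf j k b = (if b then dleft j k else dright j k)"

definition hsign :: "bool \<Rightarrow> real" where
  "hsign b = (if b then 1 else -1)"

lemma avg1_dhalf:
  "avg1 (dhalf j k b) = density (avg1 (dint j k)) (\<lambda>t. ennreal (1 + hsign b * haarw j k t))"
proof -
  have "avg1 (dhalf j k b) = density (avg1 (dint j k))
      (\<lambda>t. ennreal ((1 / 2 powi j) / (1 / (2 * 2 powi j)) * indicator (dhalf j k b) t))"
    unfolding avg1_def
  proof (rule uniform_measure_subset)
    show "dhalf j k b \<subseteq> dint j k" by (auto simp: dhalf_def dint_eq_dleft_Un_dright)
  qed (auto simp: dhalf_def emeasure_dint emeasure_dleft emeasure_dright)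
  also have "\<dots> = density (avg1 (dint j k)) (\<lambda>t. ennreal (2 * indicator (dhalf j k b) t))"
    by simp
  also have "\<dots> = density (avg1 (dint j k)) (\<lambda>t. ennreal (1 + hsign b * haarw j k t))"
  proof (rule density_cong)
    show "AE t in avg1 (dint j k). ennreal (2 * indicator (dhalf j k b) t)
                                  = ennreal (1 + hsign b * haarw j k t)"
      unfolding avg1_def
      by (intro AE_uniform_measureI AE_I2)
         (auto simp: dint_eq_dleft_Un_dright dhalf_def hsign_def haarw_eq dleft_eq dright_eq)
  qed (simp_all add: avg1_def dhalf_def)
  finally show ?thesis .
qed

lemma hsign_haarw_nonneg: "0 \<le> 1 + hsign b * haarw j k t"
  by (simp add: hsign_def haarw_eq)

lemma PiM_avg1_dhalf:
  assumes "finite I"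
  shows "PiM I (\<lambda>_. avg1 (dhalf j k b)) =
    density (PiM I (\<lambda>_. avg1 (dint j k))) (\<lambda>x. ennreal (\<Prod>i\<in>I. 1 + hsign b * haarw j k (x i)))"
proof -
  have "prob_space (avg1 (dhalf j k b))"
    unfolding avg1_def dhalf_def
    by (rule prob_space_uniform_measure) (simp_all add: emeasure_dleft emeasure_dright)
  then have "PiM I (\<lambda>_. avg1 (dhalf j k b)) =
      density (PiM I (\<lambda>_. avg1 (dint j k))) (\<lambda>x. \<Prod>i\<in>I. ennreal (1 + hsign b * haarw j k (x i)))"
    unfolding avg1_dhalf
    by (intro PiM_density assms prob_space_imp_sigma_finite prob_space_avg1_dint)
       (simp_all add: avg1_def)
  then show ?thesis
    by (simp add: prod_ennreal hsign_haarw_nonneg)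
qed

lemma sets_PiM_avg1: "sets (PiM I (\<lambda>_. avg1 A)) = sets (PiM I (\<lambda>_. lborel))"
  unfolding avg1_def by (simp cong: sets_PiM_cong)

lemma borel_measurable_pair_PiM_avg1:
  assumes "(\<lambda>(x, y). \<Phi> x y) \<in> borel_measurable (PiM I (\<lambda>_. lborel) \<Otimes>\<^sub>M PiM K (\<lambda>_. lborel))"
  shows "(\<lambda>(x, y). \<Phi> x y) \<in> borel_measurable (PiM I (\<lambda>_. avg1 A) \<Otimes>\<^sub>M PiM K (\<lambda>_. avg1 B))"
  using assms by (simp add: sets_pair_measure_cong[OF sets_PiM_avg1 sets_PiM_avg1] cong: measurable_cong_sets)

lemma borel_measurable_prod_haarw:
  assumes "S \<subseteq> I"
  shows "(\<lambda>x. \<Prod>i\<in>S. haarw j k (x i)) \<in> borel_measurable (PiM I (\<lambda>_. avg1 A))"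
  unfolding measurable_cong_sets[OF sets_PiM_avg1 refl]
  using assms by (auto intro!: borel_measurable_prod measurable_compose[OF _ borel_measurable_haarw])

lemma abs_prod_haarw_le_1: "\<bar>\<Prod>i\<in>S. haarw j k (x i)\<bar> \<le> 1"
  unfolding abs_prod by (intro prod_le_1) (simp_all add: abs_haarw_le_1)

lemma Bavg_dhalf_eq_weighted:
  assumes "(\<lambda>(x, y). \<Phi> x y) \<in> borel_measurable (PiM {..<m} (\<lambda>_. lborel) \<Otimes>\<^sub>M PiM {..<n} (\<lambda>_. lborel))"
  shows "Bavg m n \<Phi> (dhalf j k1 b1) (dhalf j k2 b2) =
    (\<integral>x. (\<integral>y. (\<Prod>i<m. 1 + hsign b1 * haarw j k1 (x i)) * (\<Prod>l<n. 1 + hsign b2 * haarw j k2 (y l))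
              * \<Phi> x y \<partial>PiM {..<n} (\<lambda>_. avg1 (dint j k2))) \<partial>PiM {..<m} (\<lambda>_. avg1 (dint j k1)))"
  unfolding Bavg_def PiM_avg1_dhalf[OF finite_lessThan]
proof (rule iterated_integral_density)
  show "(\<lambda>x. \<Prod>i<m. 1 + hsign b1 * haarw j k1 (x i)) \<in> borel_measurable (PiM {..<m} (\<lambda>_. avg1 (dint j k1)))"
    "(\<lambda>y. \<Prod>l<n. 1 + hsign b2 * haarw j k2 (y l)) \<in> borel_measurable (PiM {..<n} (\<lambda>_. avg1 (dint j k2)))"
    unfolding measurable_cong_sets[OF sets_PiM_avg1 refl] by measurable
qed (simp_all add: assms borel_measurable_pair_PiM_avg1 prob_space_imp_sigma_finite prob_space_PiM
       prob_space_avg1_dint prod_nonneg hsign_haarw_nonneg)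

lemma Bavg_dhalf:
  fixes \<Phi> :: "(nat \<Rightarrow> real) \<Rightarrow> (nat \<Rightarrow> real) \<Rightarrow> real"
  assumes meas: "(\<lambda>(x, y). \<Phi> x y) \<in> borel_measurable
                   (PiM {..<m} (\<lambda>_. lborel) \<Otimes>\<^sub>M PiM {..<n} (\<lambda>_. lborel))"
    and bdd: "\<exists>C. \<forall>x y. \<bar>\<Phi> x y\<bar> \<le> C"
  shows "Bavg m n \<Phi> (dhalf j k1 b1) (dhalf j k2 b2) =
    (\<Sum>(S, T) \<in> Pow {..<m} \<times> Pow {..<n}. hsign b1 ^ card S * hsign b2 ^ card T * mixed m n \<Phi> j k1 k2 S T)"
proof -
  define PM where "PM = PiM {..<m} (\<lambda>_. avg1 (dint j k1))"
  define PN where "PN = PiM {..<n} (\<lambda>_. avg1 (dint j k2))"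
  define F where "F p x y = hsign b1 ^ card (fst p) * hsign b2 ^ card (snd p) *
      (\<Phi> x y * (\<Prod>i\<in>fst p. haarw j k1 (x i)) * (\<Prod>l\<in>snd p. haarw j k2 (y l)))" for p x y
  obtain C where C: "\<forall>x y. \<bar>\<Phi> x y\<bar> \<le> C" using bdd by blast
  then have "0 \<le> C" by (meson abs_ge_zero order_trans)
  have "Bavg m n \<Phi> (dhalf j k1 b1) (dhalf j k2 b2) =
      (\<integral>x. (\<integral>y. (\<Sum>p \<in> Pow {..<m} \<times> Pow {..<n}. F p x y) \<partial>PN) \<partial>PM)"
    unfolding Bavg_dhalf_eq_weighted[OF meas] PM_def PN_def F_def
      prod_1_plus_mult_eq_sum_Pow[OF finite_lessThan] sum_product sum.cartesian_product
    by (simp add: sum_distrib_left sum_distrib_right split_beta algebra_simps)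
  also have "\<dots> = (\<Sum>p \<in> Pow {..<m} \<times> Pow {..<n}. \<integral>x. (\<integral>y. F p x y \<partial>PN) \<partial>PM)"
  proof (rule iterated_integral_sum)
    fix p assume "p \<in> Pow {..<m} \<times> Pow {..<n}"
    then have "fst p \<subseteq> {..<m}" "snd p \<subseteq> {..<n}" by auto
    note [measurable] = borel_measurable_pair_PiM_avg1[OF meas]
      borel_measurable_prod_haarw[OF this(1)] borel_measurable_prod_haarw[OF this(2)]
    show "(\<lambda>(x, y). F p x y) \<in> borel_measurable (PM \<Otimes>\<^sub>M PN)"
      unfolding F_def PM_def PN_def split_beta' by measurable
    have "\<bar>F p x y\<bar> \<le> C" for x y
    proof -
      have "\<bar>F p x y\<bar> =
          \<bar>\<Phi> x y\<bar> * \<bar>\<Prod>i\<in>fst p. haarw j k1 (x i)\<bar> * \<bar>\<Prod>l\<in>snd p. haarw j k2 (y l)\<bar>"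
        by (simp add: F_def abs_mult power_abs hsign_def)
      also have "\<dots> \<le> C * 1 * 1"
        using C \<open>0 \<le> C\<close> by (intro mult_mono) (simp_all add: abs_prod_haarw_le_1)
      finally show ?thesis by simp
    qed
    then show "\<exists>C. \<forall>x y. \<bar>F p x y\<bar> \<le> C" by blast
  qed (simp_all add: PM_def PN_def prob_space_PiM prob_space_avg1_dint)
  also have "\<dots> = (\<Sum>(S, T) \<in> Pow {..<m} \<times> Pow {..<n}.
                    hsign b1 ^ card S * hsign b2 ^ card T * mixed m n \<Phi> j k1 k2 S T)"
    by (simp add: mixed_def F_def PM_def PN_def split_beta)
  finally show ?thesis .
qed

lemma box_eq_sum_dhalf:
  "box \<B> j k1 k2 = (\<Sum>b1\<in>UNIV. \<Sum>b2\<in>UNIV. \<B> (dhalf j k1 b1) (dhalf j k2 b2)) / 4 - \<B> (dint j k1) (dint j k2)"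
  by (simp add: box_def dhalf_def UNIV_bool add.assoc)

lemma sum_hsign_power: "(\<Sum>b\<in>UNIV. hsign b ^ s) = (if even s then 2 else 0)"
  by (simp add: UNIV_bool hsign_def)

lemma Bavg_dint_eq_mixed_empty: "Bavg m n \<Phi> (dint j k1) (dint j k2) = mixed m n \<Phi> j k1 k2 {} {}"
  by (simp add: Bavg_def mixed_def)

theorem theorem2:
  fixes m n :: nat and j k1 k2 :: int
    and \<Phi> :: "(nat \<Rightarrow> real) \<Rightarrow> (nat \<Rightarrow> real) \<Rightarrow> real"
  assumes meas: "(\<lambda>(x, y). \<Phi> x y) \<in> borel_measurable
                   (PiM {..<m} (\<lambda>_. lborel) \<Otimes>\<^sub>M PiM {..<n} (\<lambda>_. lborel))"
    and bdd: "\<exists>C. \<forall>x y. \<bar>\<Phi> x y\<bar> \<le> C"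
  shows "box (Bavg m n \<Phi>) j k1 k2 =
    (\<Sum>(S, T) \<in> {(S, T). S \<subseteq> {..<m} \<and> T \<subseteq> {..<n} \<and> even (card S) \<and> even (card T)
                        \<and> (S, T) \<noteq> ({}, {})}.
       mixed m n \<Phi> j k1 k2 S T)"
proof -
  define P where "P = Pow {..<m} \<times> Pow {..<n}"
  define E where "E = {p \<in> P. even (card (fst p)) \<and> even (card (snd p))}"
  let ?M = "\<lambda>(S, T). mixed m n \<Phi> j k1 k2 S T"
  have "(\<Sum>b1\<in>UNIV. \<Sum>b2\<in>UNIV. Bavg m n \<Phi> (dhalf j k1 b1) (dhalf j k2 b2)) / 4
      = (\<Sum>(S, T) \<in> P. (\<Sum>b1\<in>UNIV. hsign b1 ^ card S) * (\<Sum>b2\<in>UNIV. hsign b2 ^ card T) / 4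
                          * mixed m n \<Phi> j k1 k2 S T)"
    unfolding Bavg_dhalf[OF meas bdd] P_def
    by (simp add: sum.swap[where B = "_ \<times> _"] sum_distrib_left sum_distrib_right sum_divide_distrib
                  split_beta algebra_simps UNIV_bool)
  also have "\<dots> = (\<Sum>p\<in>P. if even (card (fst p)) \<and> even (card (snd p)) then ?M p else 0)"
    by (intro sum.cong refl) (simp add: sum_hsign_power split_beta)
  also have "\<dots> = sum ?M E"
    by (simp add: E_def P_def sum.inter_filter)
  finally have "box (Bavg m n \<Phi>) j k1 k2 = sum ?M E - ?M ({}, {})"
    by (simp add: box_eq_sum_dhalf Bavg_dint_eq_mixed_empty)
  also have "\<dots> = sum ?M (E - {({}, {})})"
    by (simp add: sum_diff1 E_def P_def)
  also have "E - {({}, {})} = {(S, T). S \<subseteq> {..<m} \<and> T \<subseteq> {..<n} \<and> even (card S) \<and> even (card T)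
                                     \<and> (S, T) \<noteq> ({}, {})}"
    by (auto simp: E_def P_def)
  finally show ?thesis .
qed

end
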